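(* Let $\mathscr{F}$ be a family of languages closed under rational transduction, union, product and Kleene closure. Let $S$ be a semigroup, $I, J$ sets, $P$ a $J \times I$ matrix with entries in $S \cup \{0\}$, and suppose $M = M^0(S; I, J; P)$ is finitely generated. If $L_\sigma(S) \in \mathscr{F}$ for some finite choice of generators $\sigma$ of $S$, then $L_\tau(M) \in \mathscr{F}$ for every finite choice of generators $\tau$ of $M$.
   Context: The Rees matrix semigroup with zero $M^0(S; I, J; P)$ (where $0 \notin S$) has elements $(I \times S \times J) \cup \{0\}$, $0$ is a zero, and $(i_1, g_1, j_1)(i_2, g_2, j_2) = (i_1, g_1 P_{j_1 i_2} g_2, j_2)$ if $P_{j_1 i_2} \in S$ and $=0$ if $P_{j_1 i_2} = 0$. For a semigroup $S$, $S^1$ denotes the monoid obtained by adjoining a new identity $1$ (even if $S$ already has one). A choice of generators for $S$ is a surjective morphism $\sigma : X^+ \to S$ from a free semigroup, finite if $X$ is finite; it extends uniquely to $\sigma^1 : X^* \to S^1$. Let $\overline{X} = \{\overline{x} : x \in X\}$ be a set of formal inverses, $\hat{X} = X \cup \overline{X}$. The loop automaton of $S$ with respect to $\sigma$ is the directed labelled graph with vertex set $S^1$, having for each $a \in S^1$ and $x \in X$ an edge from $a$ to $a(x\sigma)$ labelled $x$ and an edge from $a(x\sigma)$ to $a$ labelled $\overline{x}$. The loop problem $L_\sigma(S) \subseteq \hat{X}^*$ is the set of words labelling paths from $1$ to $1$ in this graph (including the empty word). A rational transduction is a relation between free monoids realised by a finite-state transducer. *)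

theory Defs
  imports Main
begin

definition semigroup_on :: "'a set \<Rightarrow> ('a \<Rightarrow> 'a \<Rightarrow> 'a) \<Rightarrow> bool" where
  "semigroup_on G m \<longleftrightarrow>
     (\<forall>a\<in>G. \<forall>b\<in>G. m a b \<in> G) \<and>
     (\<forall>a\<in>G. \<forall>b\<in>G. \<forall>c\<in>G. m (m a b) c = m a (m b c))"

fun word_eval :: "('a \<Rightarrow> 'a \<Rightarrow> 'a) \<Rightarrow> (nat \<Rightarrow> 'a) \<Rightarrow> nat list \<Rightarrow> 'a" where
  "word_eval m \<sigma> [] = undefined"
| "word_eval m \<sigma> [x] = \<sigma> x"
| "word_eval m \<sigma> (x # y # ys) = m (\<sigma> x) (word_eval m \<sigma> (y # ys))"

definition finite_gen_choice :: "'a set \<Rightarrow> ('a \<Rightarrow> 'a \<Rightarrow> 'a) \<Rightarrow> nat set \<Rightarrow> (nat \<Rightarrow> 'a) \<Rightarrow> bool" where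
  "finite_gen_choice G m X \<sigma> \<longleftrightarrow>
     finite X \<and> (\<forall>x\<in>X. \<sigma> x \<in> G) \<and>
     (\<forall>g\<in>G. \<exists>w. w \<noteq> [] \<and> set w \<subseteq> X \<and> word_eval m \<sigma> w = g)"

section \<open>Adjoining a new identity: S^1 = 'a option, with None the new identity 1\<close>

fun mult1 :: "('a \<Rightarrow> 'a \<Rightarrow> 'a) \<Rightarrow> 'a option \<Rightarrow> 'a option \<Rightarrow> 'a option" where
  "mult1 m None b = b"
| "mult1 m (Some a) None = Some a"
| "mult1 m (Some a) (Some b) = Some (m a b)"

text \<open>Letters of \<hat>X are encoded as natural numbers: the letter x is 2*x, its formal inverse
  \<overline>x is 2*x+1.\<close>
definition letter :: "nat \<Rightarrow> nat" where "letter x = 2 * x"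
definition inv_letter :: "nat \<Rightarrow> nat" where "inv_letter x = 2 * x + 1"

inductive loop_path :: "'a set \<Rightarrow> ('a \<Rightarrow> 'a \<Rightarrow> 'a) \<Rightarrow> nat set \<Rightarrow> (nat \<Rightarrow> 'a)
    \<Rightarrow> 'a option \<Rightarrow> nat list \<Rightarrow> 'a option \<Rightarrow> bool"
  for G m X \<sigma> where
  nil: "a \<in> insert None (Some ` G) \<Longrightarrow> loop_path G m X \<sigma> a [] a"
| fwd: "\<lbrakk>a \<in> insert None (Some ` G); x \<in> X;
         loop_path G m X \<sigma> (mult1 m a (Some (\<sigma> x))) w c\<rbrakk>
        \<Longrightarrow> loop_path G m X \<sigma> a (letter x # w) c"
| bwd: "\<lbrakk>a \<in> insert None (Some ` G); x \<in> X; mult1 m a (Some (\<sigma> x)) = b;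
         loop_path G m X \<sigma> a w c\<rbrakk>
        \<Longrightarrow> loop_path G m X \<sigma> b (inv_letter x # w) c"

definition loop_problem :: "'a set \<Rightarrow> ('a \<Rightarrow> 'a \<Rightarrow> 'a) \<Rightarrow> nat set \<Rightarrow> (nat \<Rightarrow> 'a) \<Rightarrow> nat list set" where
  "loop_problem G m X \<sigma> = {w. loop_path G m X \<sigma> None w None}"

text \<open>A finite transducer: finitely many transitions (q, u, v, q') reading word u and writing
  word v, an initial state and a set of final states.\<close>
inductive trans_run :: "(nat \<times> nat list \<times> nat list \<times> nat) set \<Rightarrow> nat \<Rightarrow> nat list \<Rightarrow> nat list \<Rightarrow> nat \<Rightarrow> bool"
  for \<delta> where
  stay: "trans_run \<delta> q [] [] q"
| step: "\<lbrakk>(q, u, v, q') \<in> \<delta>; trans_run \<delta> q' u' v' r\<rbrakk> \<Longrightarrow> trans_run \<delta> q (u @ u') (v @ v') r"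

definition rational_transduction :: "(nat list \<times> nat list) set \<Rightarrow> bool" where
  "rational_transduction T \<longleftrightarrow>
     (\<exists>\<delta> q0 Fin. finite \<delta> \<and> finite Fin \<and>
        T = {(u, v). \<exists>f\<in>Fin. trans_run \<delta> q0 u v f})"

definition lang_prod :: "nat list set \<Rightarrow> nat list set \<Rightarrow> nat list set" where
  "lang_prod L1 L2 = {u @ v | u v. u \<in> L1 \<and> v \<in> L2}"

definition lang_star :: "nat list set \<Rightarrow> nat list set" where
  "lang_star L = {concat ws | ws. set ws \<subseteq> L}"

section \<open>Rees matrix semigroup with zero; None is the zero\<close>

definition rees_carrier :: "'s set \<Rightarrow> 'i set \<Rightarrow> 'j set \<Rightarrow> ('i \<times> 's \<times> 'j) option set" where
  "rees_carrier S I J = insert None (Some ` (I \<times> S \<times> J))"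

fun rees_mult :: "('s \<Rightarrow> 's \<Rightarrow> 's) \<Rightarrow> ('j \<Rightarrow> 'i \<Rightarrow> 's option)
    \<Rightarrow> ('i \<times> 's \<times> 'j) option \<Rightarrow> ('i \<times> 's \<times> 'j) option \<Rightarrow> ('i \<times> 's \<times> 'j) option" where
  "rees_mult m P (Some (i1, g1, j1)) (Some (i2, g2, j2)) =
     (case P j1 i2 of None \<Rightarrow> None | Some p \<Rightarrow> Some (i1, m (m g1 p) g2, j2))"
| "rees_mult m P _ _ = None"

end

theory Submission
  imports Defs
begin

text \<open>A loop at 1 in the loop automaton of M = M^0(S; I, J; P) splits at its visits to the
  vertices 1 and 0 of M^1 into segments, and each segment is the output of a finite transducer
  reading a loop of the loop automaton of S. Between 1 and 0 the M-path runs through vertices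
  (i, g, j) whose row i never changes; the transducer keeps i and the current column j in its
  state while the S-path stands at g. An edge labelled by a generator (i', g', j') then becomes a
  word for P j i' g', an edge from 1 becomes a word for g', and the S-path returns to 1 either along
  the formal inverse of such a word or, once the M-path has fallen to 0, along arbitrary inverse
  letters. Hence the four languages of segments from 1 or 0 to 1 or 0 are rational images of
  L_\<sigma>(S), and L_\<tau>(M) is the language of paths from 1 to 1 in a graph on these two vertices
  labelled by them, which is built from them by union, product and star.\<close>

section \<open>Loop automata of semigroups\<close>

lemma letter_eq_iff [simp]: "letter x = letter y \<longleftrightarrow> x = y"
  by (simp add: letter_def)

lemma inv_letter_eq_iff [simp]: "inv_letter x = inv_letter y \<longleftrightarrow> x = y"
  by (simp add: inv_letter_def)

lemma letter_neq_inv_letter [simp]: "letter x \<noteq> inv_letter y" "inv_letter y \<noteq> letter x"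
  by (simp_all add: letter_def inv_letter_def) presburger+

lemma letter_cases: obtains x where "n = letter x" | x where "n = inv_letter x"
  unfolding letter_def inv_letter_def by (metis dvd_mult_div_cancel odd_two_times_div_two_succ)

definition inv_word :: "nat list \<Rightarrow> nat list" where
  "inv_word w = rev (map inv_letter w)"

lemma inv_word_Nil [simp]: "inv_word [] = []"
  and inv_word_Cons [simp]: "inv_word (x # w) = inv_word w @ [inv_letter x]"
  and inv_word_snoc [simp]: "inv_word (w @ [x]) = inv_letter x # inv_word w"
  by (simp_all add: inv_word_def)

abbreviation carrier1 :: "'a set \<Rightarrow> 'a option set" where
  "carrier1 G \<equiv> insert None (Some ` G)"

lemma Some_mem_image_Some_iff [simp]: "Some a \<in> Some ` A \<longleftrightarrow> a \<in> A"
  by auto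

lemma mult1_None_right [simp]: "mult1 m a None = a"
  by (cases a) auto

lemma loop_path_Nil_iff: "loop_path G m X \<sigma> a [] c \<longleftrightarrow> a = c \<and> a \<in> carrier1 G"
  by (auto elim: loop_path.cases intro: loop_path.nil)

lemma loop_path_letter_iff:
  "loop_path G m X \<sigma> a (letter x # w) c \<longleftrightarrow>
     a \<in> carrier1 G \<and> x \<in> X \<and> loop_path G m X \<sigma> (mult1 m a (Some (\<sigma> x))) w c"
  by (auto elim: loop_path.cases intro: loop_path.fwd)

lemma loop_path_inv_letter_iff:
  "loop_path G m X \<sigma> b (inv_letter x # w) c \<longleftrightarrow>
     (\<exists>a \<in> carrier1 G. x \<in> X \<and> mult1 m a (Some (\<sigma> x)) = b \<and> loop_path G m X \<sigma> a w c)"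
proof
  assume "loop_path G m X \<sigma> b (inv_letter x # w) c"
  then show "\<exists>a \<in> carrier1 G. x \<in> X \<and> mult1 m a (Some (\<sigma> x)) = b \<and> loop_path G m X \<sigma> a w c"
    by (cases rule: loop_path.cases) auto
qed (blast intro: loop_path.bwd)

lemma loop_path_append:
  "loop_path G m X \<sigma> a u b \<Longrightarrow> loop_path G m X \<sigma> b w c \<Longrightarrow> loop_path G m X \<sigma> a (u @ w) c"
  by (induction rule: loop_path.induct) (auto intro: loop_path.intros)

fun word_eval1 :: "('a \<Rightarrow> 'a \<Rightarrow> 'a) \<Rightarrow> (nat \<Rightarrow> 'a) \<Rightarrow> nat list \<Rightarrow> 'a option" where
  "word_eval1 m \<sigma> [] = None"
| "word_eval1 m \<sigma> (x # w) = mult1 m (Some (\<sigma> x)) (word_eval1 m \<sigma> w)"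

lemma word_eval1_eq_word_eval: "w \<noteq> [] \<Longrightarrow> word_eval1 m \<sigma> w = Some (word_eval m \<sigma> w)"
  by (induction m \<sigma> w rule: word_eval.induct) auto

locale semigroup_loops =
  fixes G :: "'a set" and m :: "'a \<Rightarrow> 'a \<Rightarrow> 'a" and X :: "nat set" and \<sigma> :: "nat \<Rightarrow> 'a"
  assumes semigroup: "semigroup_on G m"
    and gens_in: "\<And>x. x \<in> X \<Longrightarrow> \<sigma> x \<in> G"
begin

abbreviation path :: "'a option \<Rightarrow> nat list \<Rightarrow> 'a option \<Rightarrow> bool" where
  "path \<equiv> loop_path G m X \<sigma>"

lemma mult_closed: "a \<in> G \<Longrightarrow> b \<in> G \<Longrightarrow> m a b \<in> G"
  and mult_assoc: "a \<in> G \<Longrightarrow> b \<in> G \<Longrightarrow> c \<in> G \<Longrightarrow> m (m a b) c = m a (m b c)"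
  using semigroup by (auto simp: semigroup_on_def)

lemma mult1_closed: "a \<in> carrier1 G \<Longrightarrow> b \<in> carrier1 G \<Longrightarrow> mult1 m a b \<in> carrier1 G"
  by (cases a; cases b) (auto simp: mult_closed)

lemma mult1_assoc:
  "a \<in> carrier1 G \<Longrightarrow> b \<in> carrier1 G \<Longrightarrow> c \<in> carrier1 G \<Longrightarrow>
     mult1 m (mult1 m a b) c = mult1 m a (mult1 m b c)"
  by (cases a; cases b; cases c) (auto simp: mult_assoc)

abbreviation eval1 :: "nat list \<Rightarrow> 'a option" where
  "eval1 \<equiv> word_eval1 m \<sigma>"

lemma gens1_in: "x \<in> X \<Longrightarrow> Some (\<sigma> x) \<in> carrier1 G"
  by (simp add: gens_in)

lemma eval1_in: "set w \<subseteq> X \<Longrightarrow> eval1 w \<in> carrier1 G"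
proof (induction w)
  case (Cons x w)
  then show ?case using mult1_closed[OF gens1_in] by simp
qed simp

lemma eval1_append: "set u \<subseteq> X \<Longrightarrow> set w \<subseteq> X \<Longrightarrow> eval1 (u @ w) = mult1 m (eval1 u) (eval1 w)"
proof (induction u)
  case (Cons x u)
  then show ?case
    using mult1_assoc[OF gens1_in eval1_in eval1_in, of x u w] by simp
qed simp

lemma path_map_letter_iff:
  "a \<in> carrier1 G \<Longrightarrow> set w \<subseteq> X \<Longrightarrow> path a (map letter w) c \<longleftrightarrow> c = mult1 m a (eval1 w)"
proof (induction w arbitrary: a)
  case Nil
  then show ?case by (auto simp: loop_path_Nil_iff)
next
  case (Cons x w)
  then have x: "x \<in> X" and w: "set w \<subseteq> X" by simp_all
  have "path a (map letter (x # w)) c \<longleftrightarrow> path (mult1 m a (Some (\<sigma> x))) (map letter w) c"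
    using Cons.prems x by (simp add: loop_path_letter_iff)
  also have "\<dots> \<longleftrightarrow> c = mult1 m (mult1 m a (Some (\<sigma> x))) (eval1 w)"
    using Cons.IH[OF mult1_closed[OF Cons.prems(1) gens1_in[OF x]] w] .
  also have "mult1 m (mult1 m a (Some (\<sigma> x))) (eval1 w) = mult1 m a (eval1 (x # w))"
    using mult1_assoc[OF Cons.prems(1) gens1_in[OF x] eval1_in[OF w]] by simp
  finally show ?case .
qed

lemma path_edge:
  assumes "a \<in> carrier1 G" "x \<in> X"
  shows "path a [letter x] (mult1 m a (Some (\<sigma> x)))"
proof (rule loop_path.fwd[OF assms])
  show "path (mult1 m a (Some (\<sigma> x))) [] (mult1 m a (Some (\<sigma> x)))"
    using mult1_closed[OF assms(1) gens1_in[OF assms(2)]] by (rule loop_path.nil)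
qed

lemma path_inv_edge: "a \<in> carrier1 G \<Longrightarrow> x \<in> X \<Longrightarrow> path (mult1 m a (Some (\<sigma> x))) [inv_letter x] a"
  by (auto simp: loop_path_inv_letter_iff loop_path_Nil_iff)

lemma path_source_in: "path a w c \<Longrightarrow> a \<in> carrier1 G"
  by (induction rule: loop_path.induct) (auto simp: mult_closed gens_in)

lemma path_append_iff: "path a (u @ w) c \<longleftrightarrow> (\<exists>b. path a u b \<and> path b w c)"
proof (induction u arbitrary: a)
  case Nil
  then show ?case by (auto simp: loop_path_Nil_iff dest: path_source_in)
next
  case (Cons n u)
  then show ?case
    by (cases n rule: letter_cases) (auto simp: loop_path_letter_iff loop_path_inv_letter_iff)
qed


lemma path_append_letter_neq_None: "path a (w @ [letter x]) c \<Longrightarrow> c \<noteq> None"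
  by (auto simp: path_append_iff loop_path_letter_iff loop_path_Nil_iff)

lemma path_map_letter_neq_None: "path a (map letter w) c \<Longrightarrow> w \<noteq> [] \<Longrightarrow> c \<noteq> None"
  by (cases w rule: rev_exhaust) (auto dest: path_append_letter_neq_None)

lemma path_inv_word_iff_path_map_letter:
  "path c (inv_word w) a \<longleftrightarrow> path a (map letter w) c"
proof (induction w arbitrary: a)
  case Nil
  then show ?case by (auto simp: loop_path_Nil_iff)
next
  case (Cons x w)
  have "path c (inv_word (x # w)) a \<longleftrightarrow> (\<exists>b. path c (inv_word w) b \<and> path b [inv_letter x] a)"
    by (simp add: path_append_iff)
  also have "\<dots> \<longleftrightarrow> a \<in> carrier1 G \<and> x \<in> X \<and> path c (inv_word w) (mult1 m a (Some (\<sigma> x)))"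
    by (auto simp: loop_path_inv_letter_iff loop_path_Nil_iff)
  also have "\<dots> \<longleftrightarrow> path a (map letter (x # w)) c"
    by (simp add: Cons.IH loop_path_letter_iff)
  finally show ?case .
qed

lemma path_inv_word_iff:
  "set w \<subseteq> X \<Longrightarrow> path c (inv_word w) a \<longleftrightarrow> a \<in> carrier1 G \<and> c = mult1 m a (eval1 w)"
  unfolding path_inv_word_iff_path_map_letter
  by (metis path_map_letter_iff path_source_in)

end

section \<open>Rees matrix semigroups\<close>

lemma rees_mult_eq_SomeE:
  assumes "rees_mult m P a b = Some r"
  obtains i g j i' g' j' p where "a = Some (i, g, j)" "b = Some (i', g', j')"
    "P j i' = Some p" "r = (i, m (m g p) g', j')"
proof -
  from assms obtain i g j i' g' j' where ab: "a = Some (i, g, j)" "b = Some (i', g', j')"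
    by (cases "(m, P, a, b)" rule: rees_mult.cases) auto
  with assms obtain p where "P j i' = Some p" by (cases "P j i'") auto
  with that ab assms show ?thesis by simp
qed

lemma rees_carrier_cases:
  assumes "a \<in> rees_carrier S I J"
  obtains "a = None" | i g j where "a = Some (i, g, j)" "i \<in> I" "g \<in> S" "j \<in> J"
  using assms unfolding rees_carrier_def by blast

lemma Some_in_rees_carrier_iff [simp]:
  "Some (i, g, j) \<in> rees_carrier S I J \<longleftrightarrow> i \<in> I \<and> g \<in> S \<and> j \<in> J"
  and None_in_rees_carrier [simp]: "None \<in> rees_carrier S I J"
  by (auto simp: rees_carrier_def)

lemma semigroup_on_rees:
  assumes S: "semigroup_on S m"
    and P: "\<And>j i. j \<in> J \<Longrightarrow> i \<in> I \<Longrightarrow> P j i = None \<or> the (P j i) \<in> S"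
  shows "semigroup_on (rees_carrier S I J) (rees_mult m P)"
proof -
  have P': "p \<in> S" if "P j i = Some p" "j \<in> J" "i \<in> I" for j i p
    using P[OF that(2,3)] that(1) by simp
  have closed: "rees_mult m P a b \<in> rees_carrier S I J"
    if "a \<in> rees_carrier S I J" "b \<in> rees_carrier S I J" for a b
  proof (cases rule: rees_carrier_cases[OF that(1)]; cases rule: rees_carrier_cases[OF that(2)])
    fix i1 g1 j1 i2 g2 j2
    assume ab: "a = Some (i1, g1, j1)" "b = Some (i2, g2, j2)"
      and mem: "i1 \<in> I" "g1 \<in> S" "j1 \<in> J" "i2 \<in> I" "g2 \<in> S" "j2 \<in> J"
    show ?thesis
    proof (cases "P j1 i2")
      case (Some p)
      with mem P' have "p \<in> S" by blast
      with S mem ab Some show ?thesis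
        by (simp add: semigroup_on_def)
    qed (simp add: ab)
  qed simp_all
  have assoc: "rees_mult m P (rees_mult m P a b) c = rees_mult m P a (rees_mult m P b c)"
    if "a \<in> rees_carrier S I J" "b \<in> rees_carrier S I J" "c \<in> rees_carrier S I J" for a b c
  proof (cases rule: rees_carrier_cases[OF that(1)];
      cases rule: rees_carrier_cases[OF that(2)]; cases rule: rees_carrier_cases[OF that(3)])
    fix i1 g1 j1 i2 g2 j2 i3 g3 j3
    assume abc: "a = Some (i1, g1, j1)" "b = Some (i2, g2, j2)" "c = Some (i3, g3, j3)"
      and mem: "i1 \<in> I" "g1 \<in> S" "j1 \<in> J" "i2 \<in> I" "g2 \<in> S" "j2 \<in> J" "i3 \<in> I" "g3 \<in> S" "j3 \<in> J"
    show ?thesis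
    proof (cases "P j1 i2"; cases "P j2 i3")
      fix p q assume pq: "P j1 i2 = Some p" "P j2 i3 = Some q"
      with mem P' have "p \<in> S" "q \<in> S" by blast+
      with S abc mem pq show ?thesis
        by (simp add: semigroup_on_def)
    qed (simp_all add: abc)
  qed simp_all
  show ?thesis
    by (simp add: semigroup_on_def closed assoc)
qed

lemma word_eval_rees_row_col:
  "w \<noteq> [] \<Longrightarrow> word_eval (rees_mult m P) \<tau> w = Some (i, g, j) \<Longrightarrow>
     (\<exists>y \<in> set w. \<exists>g' j'. \<tau> y = Some (i, g', j')) \<and> (\<exists>y \<in> set w. \<exists>i' g'. \<tau> y = Some (i', g', j))"
proof (induction "rees_mult m P" \<tau> w arbitrary: i g j rule: word_eval.induct)
  case (3 \<tau> x y ys)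
  from "3.prems"(2) obtain g1 j1 i2 g2 where
    "\<tau> x = Some (i, g1, j1)" "word_eval (rees_mult m P) \<tau> (y # ys) = Some (i2, g2, j)"
    by (auto elim!: rees_mult_eq_SomeE)
  with "3.hyps"[of i2 g2 j] show ?case by fastforce
qed auto

section \<open>Languages and transducers\<close>

lemma lang_prodI: "u \<in> A \<Longrightarrow> w \<in> B \<Longrightarrow> u @ w \<in> lang_prod A B"
  unfolding lang_prod_def by blast

lemma lang_star_Nil: "[] \<in> lang_star A"
  unfolding lang_star_def by (auto intro: exI[of _ "[]"])

lemma lang_star_append: "u \<in> A \<Longrightarrow> w \<in> lang_star A \<Longrightarrow> u @ w \<in> lang_star A"
proof -
  assume "u \<in> A" "w \<in> lang_star A"
  then obtain ws where "w = concat ws" "set (u # ws) \<subseteq> A"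
    unfolding lang_star_def by auto
  then show ?thesis
    unfolding lang_star_def by (auto intro!: exI[of _ "u # ws"])
qed

lemma lang_star_least:
  assumes "[] \<in> K" and "\<And>u w. u \<in> A \<Longrightarrow> w \<in> K \<Longrightarrow> u @ w \<in> K"
  shows "lang_star A \<subseteq> K"
proof
  fix w assume "w \<in> lang_star A"
  then obtain ws where "w = concat ws" "set ws \<subseteq> A"
    unfolding lang_star_def by blast
  then show "w \<in> K"
    using assms by (induction ws arbitrary: w) auto
qed

text \<open>In a graph on two vertices 1 and 0 whose edges 1 \<rightarrow> 1, 1 \<rightarrow> 0, 0 \<rightarrow> 1 and 0 \<rightarrow> 0
  are labelled by the words of A, B, C and D, these are the labels of the paths from 1 to 1
  and from 0 to 1.\<close>

definition paths_one_one :: "nat list set \<Rightarrow> nat list set \<Rightarrow> nat list set \<Rightarrow> nat list set \<Rightarrow> nat list set" where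
  "paths_one_one A B C D = lang_star (A \<union> lang_prod B (lang_prod (lang_star D) C))"

definition paths_zero_one :: "nat list set \<Rightarrow> nat list set \<Rightarrow> nat list set \<Rightarrow> nat list set \<Rightarrow> nat list set" where
  "paths_zero_one A B C D = lang_prod (lang_prod (lang_star D) C) (paths_one_one A B C D)"

lemma paths_one_one_Nil: "[] \<in> paths_one_one A B C D"
  unfolding paths_one_one_def by (rule lang_star_Nil)

lemma paths_one_one_prepend_one:
  "u \<in> A \<Longrightarrow> w \<in> paths_one_one A B C D \<Longrightarrow> u @ w \<in> paths_one_one A B C D"
  unfolding paths_one_one_def by (rule lang_star_append) simp_all

lemma paths_one_one_prepend_zero:
  assumes "u \<in> B" "w \<in> paths_zero_one A B C D"
  shows "u @ w \<in> paths_one_one A B C D"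
proof -
  from assms(2) obtain s c l where w: "w = (s @ c) @ l" and "s \<in> lang_star D" "c \<in> C"
    and l: "l \<in> paths_one_one A B C D"
    unfolding paths_zero_one_def lang_prod_def by blast
  then have "u @ s @ c \<in> A \<union> lang_prod B (lang_prod (lang_star D) C)"
    using assms(1) by (auto intro!: lang_prodI)
  from lang_star_append[OF this l[unfolded paths_one_one_def]] show ?thesis
    unfolding w paths_one_one_def by simp
qed

lemma paths_zero_one_prepend_one:
  "u \<in> C \<Longrightarrow> w \<in> paths_one_one A B C D \<Longrightarrow> u @ w \<in> paths_zero_one A B C D"
  unfolding paths_zero_one_def using lang_prodI[OF lang_prodI[OF lang_star_Nil]] by fastforce

lemma paths_zero_one_prepend_zero:
  assumes "u \<in> D" "w \<in> paths_zero_one A B C D"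
  shows "u @ w \<in> paths_zero_one A B C D"
proof -
  from assms(2) obtain s c l where "w = (s @ c) @ l" "s \<in> lang_star D" "c \<in> C"
    "l \<in> paths_one_one A B C D"
    unfolding paths_zero_one_def lang_prod_def by blast
  moreover have "(u @ s) @ c \<in> lang_prod (lang_star D) C"
    using calculation assms(1) by (intro lang_prodI lang_star_append)
  ultimately show ?thesis
    unfolding paths_zero_one_def by (metis append.assoc lang_prodI)
qed

lemma paths_one_one_sound:
  fixes path :: "'v \<Rightarrow> nat list \<Rightarrow> 'v \<Rightarrow> bool"
  assumes nil: "path p [] p" "path q [] q"
    and append: "\<And>a u b w c. path a u b \<Longrightarrow> path b w c \<Longrightarrow> path a (u @ w) c"
    and A: "\<And>u. u \<in> A \<Longrightarrow> path p u p" and B: "\<And>u. u \<in> B \<Longrightarrow> path p u q"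
    and C: "\<And>u. u \<in> C \<Longrightarrow> path q u p" and D: "\<And>u. u \<in> D \<Longrightarrow> path q u q"
  shows "paths_one_one A B C D \<subseteq> {u. path p u p}"
proof -
  have "lang_star D \<subseteq> {u. path q u q}"
    by (rule lang_star_least) (auto intro: nil append D)
  then have "u \<in> lang_prod B (lang_prod (lang_star D) C) \<Longrightarrow> path p u p" for u
    unfolding lang_prod_def by (blast intro: append B C)
  then show ?thesis
    unfolding paths_one_one_def by (intro lang_star_least) (auto intro: nil append A)
qed

inductive transducer_run :: "('q \<times> nat list \<times> nat list \<times> 'q) set \<Rightarrow> 'q \<Rightarrow> nat list \<Rightarrow> nat list \<Rightarrow> 'q \<Rightarrow> bool"
  for \<delta> where
  stay: "transducer_run \<delta> q [] [] q"
| step: "(q, u, v, q') \<in> \<delta> \<Longrightarrow> transducer_run \<delta> q' u' v' r \<Longrightarrow> transducer_run \<delta> q (u @ u') (v @ v') r"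

lemma trans_run_image_iff:
  fixes h :: "'q \<Rightarrow> nat"
  assumes h: "inj_on h Q" and \<delta>_Q: "\<And>q u v q'. (q, u, v, q') \<in> \<delta> \<Longrightarrow> q \<in> Q \<and> q' \<in> Q"
    and "q \<in> Q"
  shows "trans_run ((\<lambda>(q, u, v, q'). (h q, u, v, h q')) ` \<delta>) (h q) u v n \<longleftrightarrow>
    (\<exists>r \<in> Q. n = h r \<and> transducer_run \<delta> q u v r)"
    (is "trans_run ?\<delta> _ _ _ _ \<longleftrightarrow> _")
proof
  have "\<exists>r \<in> Q. n' = h r \<and> transducer_run \<delta> q u v r"
    if "trans_run ?\<delta> n u v n'" "q \<in> Q" "h q = n" for n u v n' q
    using that
  proof (induction arbitrary: q rule: trans_run.induct)
    case (stay n)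
    then show ?case by (auto intro: transducer_run.stay)
  next
    case (step n u v n' u' v' r)
    from step.hyps(1) obtain q1 q1' where t: "(q1, u, v, q1') \<in> \<delta>" "h q1 = n" "h q1' = n'"
      by auto
    with step.prems h \<delta>_Q[OF t(1)] have "q1 = q" by (auto dest: inj_onD)
    with step.IH[of q1'] \<delta>_Q[OF t(1)] t show ?case
      by (auto intro: transducer_run.step)
  qed
  with \<open>q \<in> Q\<close> show "trans_run ?\<delta> (h q) u v n \<Longrightarrow> \<exists>r \<in> Q. n = h r \<and> transducer_run \<delta> q u v r"
    by blast
next
  have "trans_run ?\<delta> (h q) u v (h r)" if "transducer_run \<delta> q u v r" for q u v r
    using that by induction (force intro: trans_run.intros)+
  then show "\<exists>r \<in> Q. n = h r \<and> transducer_run \<delta> q u v r \<Longrightarrow> trans_run ?\<delta> (h q) u v n"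
    by blast
qed

lemma rational_transduction_transducer_run:
  fixes \<delta> :: "('q \<times> nat list \<times> nat list \<times> 'q) set"
  assumes "finite \<delta>" and "finite F"
  shows "rational_transduction {(u, v). \<exists>f \<in> F. transducer_run \<delta> q0 u v f}"
proof -
  define Q where "Q = insert q0 (F \<union> (\<lambda>(q, u, v, q'). q) ` \<delta> \<union> (\<lambda>(q, u, v, q'). q') ` \<delta>)"
  have "finite Q" using assms by (simp add: Q_def)
  then obtain h :: "'q \<Rightarrow> nat" where h: "inj_on h Q"
    using finite_imp_inj_to_nat_seg by blast
  have \<delta>_Q: "q \<in> Q \<and> q' \<in> Q" if "(q, u, v, q') \<in> \<delta>" for q u v q'
    using that by (force simp: Q_def)
  define \<delta>' where "\<delta>' = (\<lambda>(q, u, v, q'). (h q, u, v, h q')) ` \<delta>"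
  have "q0 \<in> Q" "F \<subseteq> Q" by (auto simp: Q_def)
  have run_iff: "trans_run \<delta>' (h q0) u v n \<longleftrightarrow> (\<exists>r \<in> Q. n = h r \<and> transducer_run \<delta> q0 u v r)"
    for u v n
    unfolding \<delta>'_def by (rule trans_run_image_iff[OF h \<delta>_Q \<open>q0 \<in> Q\<close>])
  have "{(u, v). \<exists>f \<in> F. transducer_run \<delta> q0 u v f} = {(u, v). \<exists>f \<in> h ` F. trans_run \<delta>' (h q0) u v f}"
  proof safe
    fix u v f assume "f \<in> F" "transducer_run \<delta> q0 u v f"
    with \<open>F \<subseteq> Q\<close> run_iff show "\<exists>f \<in> h ` F. trans_run \<delta>' (h q0) u v f" by blast
  next
    fix u v f assume "f \<in> F" "trans_run \<delta>' (h q0) u v (h f)"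
    with \<open>F \<subseteq> Q\<close> run_iff inj_onD[OF h] show "\<exists>f \<in> F. transducer_run \<delta> q0 u v f" by blast
  qed
  moreover have "finite \<delta>'" using assms(1) by (simp add: \<delta>'_def)
  ultimately show ?thesis
    unfolding rational_transduction_def using assms(2) by blast
qed

section \<open>From loops of S to loops of the Rees matrix semigroup\<close>

datatype ('i, 'j) state = Start_one | Start_zero | Track 'i 'j | Guess 'i 'j | Done_one | Done_zero

locale rees_loops =
  fixes S :: "'s set" and mS :: "'s \<Rightarrow> 's \<Rightarrow> 's"
    and I :: "'i set" and J :: "'j set" and P :: "'j \<Rightarrow> 'i \<Rightarrow> 's option"
    and X :: "nat set" and \<sigma> :: "nat \<Rightarrow> 's"
    and Y :: "nat set" and \<tau> :: "nat \<Rightarrow> ('i \<times> 's \<times> 'j) option"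
  assumes S_semigroup: "semigroup_on S mS"
    and P_entries: "\<And>j i. j \<in> J \<Longrightarrow> i \<in> I \<Longrightarrow> P j i = None \<or> the (P j i) \<in> S"
    and S_gens: "finite_gen_choice S mS X \<sigma>"
    and M_gens: "finite_gen_choice (rees_carrier S I J) (rees_mult mS P) Y \<tau>"
begin

sublocale S: semigroup_loops S mS X \<sigma>
  using S_semigroup S_gens by unfold_locales (auto simp: finite_gen_choice_def)

sublocale M: semigroup_loops "rees_carrier S I J" "rees_mult mS P" Y \<tau>
  using semigroup_on_rees[OF S_semigroup P_entries] M_gens
  by unfold_locales (auto simp: finite_gen_choice_def)

abbreviation M1 :: "('i \<times> 's \<times> 'j) option option set" where
  "M1 \<equiv> carrier1 (rees_carrier S I J)"

lemma P_entry_in: "P j i = Some p \<Longrightarrow> j \<in> J \<Longrightarrow> i \<in> I \<Longrightarrow> p \<in> S"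
  using P_entries[of j i] by simp

lemma gen_in: "y \<in> Y \<Longrightarrow> \<tau> y = Some (i, g, j) \<Longrightarrow> i \<in> I \<and> g \<in> S \<and> j \<in> J"
  using M.gens_in[of y] by simp

lemma P_mult_gen_in: "y \<in> Y \<Longrightarrow> \<tau> y = Some (i', g, j') \<Longrightarrow> P j i' = Some p \<Longrightarrow> j \<in> J \<Longrightarrow> mS p g \<in> S"
  using gen_in P_entry_in S.mult_closed by blast

definition rows :: "'i set" where
  "rows = {i. \<exists>y \<in> Y. \<exists>g j. \<tau> y = Some (i, g, j)}"

definition cols :: "'j set" where
  "cols = {j. \<exists>y \<in> Y. \<exists>i g. \<tau> y = Some (i, g, j)}"

lemma rows_subset: "rows \<subseteq> I" and cols_subset: "cols \<subseteq> J"
  by (auto simp: rows_def cols_def dest: gen_in)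

lemma gen_in_rows_cols: "y \<in> Y \<Longrightarrow> \<tau> y = Some (i, g, j) \<Longrightarrow> i \<in> rows \<and> j \<in> cols"
  by (auto simp: rows_def cols_def)

lemma finite_rows: "finite rows" and finite_cols: "finite cols"
proof -
  have "finite Y" using M_gens by (simp add: finite_gen_choice_def)
  moreover have "rows \<subseteq> (\<lambda>y. fst (the (\<tau> y))) ` Y"
  proof
    fix i assume "i \<in> rows"
    then obtain y g j where "y \<in> Y" "\<tau> y = Some (i, g, j)" by (auto simp: rows_def)
    then show "i \<in> (\<lambda>y. fst (the (\<tau> y))) ` Y" by (simp add: image_iff) (metis fst_conv option.sel)
  qed
  moreover have "cols \<subseteq> (\<lambda>y. snd (snd (the (\<tau> y)))) ` Y"
  proof
    fix j assume "j \<in> cols"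
    then obtain y i g where "y \<in> Y" "\<tau> y = Some (i, g, j)" by (auto simp: cols_def)
    then show "j \<in> (\<lambda>y. snd (snd (the (\<tau> y)))) ` Y" by (simp add: image_iff) (metis snd_conv option.sel)
  qed
  ultimately show "finite rows" "finite cols"
    using finite_subset by blast+
qed

lemma rees_carrier_rows_cols:
  assumes "Some (i, g, j) \<in> rees_carrier S I J"
  shows "i \<in> rows" "j \<in> cols"
proof -
  have "\<forall>a \<in> rees_carrier S I J. \<exists>w. w \<noteq> [] \<and> set w \<subseteq> Y \<and> word_eval (rees_mult mS P) \<tau> w = a"
    using M_gens by (simp add: finite_gen_choice_def)
  then obtain w where w: "w \<noteq> []" "set w \<subseteq> Y" "word_eval (rees_mult mS P) \<tau> w = Some (i, g, j)"
    using assms by blast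
  from word_eval_rees_row_col[OF w(1,3)] obtain y1 g1 j1 y2 i2 g2 where
    "y1 \<in> set w" "\<tau> y1 = Some (i, g1, j1)" "y2 \<in> set w" "\<tau> y2 = Some (i2, g2, j)"
    by blast
  with w(2) gen_in_rows_cols show "i \<in> rows" "j \<in> cols"
    by blast+
qed

definition spell :: "'s \<Rightarrow> nat list" where
  "spell g = (SOME w. w \<noteq> [] \<and> set w \<subseteq> X \<and> S.eval1 w = Some g)"

lemma spell: "g \<in> S \<Longrightarrow> spell g \<noteq> [] \<and> set (spell g) \<subseteq> X \<and> S.eval1 (spell g) = Some g"
  unfolding spell_def
proof (rule someI_ex)
  assume "g \<in> S"
  then show "\<exists>w. w \<noteq> [] \<and> set w \<subseteq> X \<and> S.eval1 w = Some g"
    using S_gens word_eval1_eq_word_eval unfolding finite_gen_choice_def by metis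
qed

definition kills :: "'j \<Rightarrow> nat \<Rightarrow> bool" where
  "kills j y \<longleftrightarrow> (case \<tau> y of None \<Rightarrow> True | Some (i', _, _) \<Rightarrow> P j i' = None)"

lemma kills_iff: "kills j y \<longleftrightarrow> rees_mult mS P (Some (i, g, j)) (\<tau> y) = None"
  by (auto simp: kills_def split: option.split)

lemma rees_mult_killed: "kills j y \<Longrightarrow> rees_mult mS P (Some (i, g, j)) (\<tau> y) = None"
  using kills_iff by blast

text \<open>After unwinding such a word, the detour \<open>[inv_letter x, letter x]\<close> in
  \<open>backward\<close> makes sure that the S-path stands at an element of S and not at 1; the letter read by
  \<open>revive\<close> does the same before \<open>Guess\<close>.\<close>

inductive_set transitions :: "(('i, 'j) state \<times> nat list \<times> nat list \<times> ('i, 'j) state) set" where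
  enter: "y \<in> Y \<Longrightarrow> \<tau> y = Some (i, g, j) \<Longrightarrow>
    (Start_one, map letter (spell g), [letter y], Track i j) \<in> transitions"
| forward: "i \<in> rows \<Longrightarrow> j \<in> cols \<Longrightarrow> y \<in> Y \<Longrightarrow> \<tau> y = Some (i', g, j') \<Longrightarrow> P j i' = Some p \<Longrightarrow>
    (Track i j, map letter (spell (mS p g)), [letter y], Track i j') \<in> transitions"
| backward: "i \<in> rows \<Longrightarrow> j' \<in> cols \<Longrightarrow> y \<in> Y \<Longrightarrow> x \<in> X \<Longrightarrow> \<tau> y = Some (i', g, j) \<Longrightarrow>
    P j' i' = Some p \<Longrightarrow>
    (Track i j, inv_word (spell (mS p g)) @ [inv_letter x, letter x], [inv_letter y], Track i j')
      \<in> transitions"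
| leave: "y \<in> Y \<Longrightarrow> \<tau> y = Some (i, g, j) \<Longrightarrow>
    (Track i j, inv_word (spell g), [inv_letter y], Done_one) \<in> transitions"
| vanish: "i \<in> rows \<Longrightarrow> j \<in> cols \<Longrightarrow> y \<in> Y \<Longrightarrow> kills j y \<Longrightarrow>
    (Track i j, [], [letter y], Done_zero) \<in> transitions"
| unwind: "x \<in> X \<Longrightarrow> (Done_zero, [inv_letter x], [], Done_zero) \<in> transitions"
| revive: "i \<in> rows \<Longrightarrow> j \<in> cols \<Longrightarrow> y \<in> Y \<Longrightarrow> kills j y \<Longrightarrow> x \<in> X \<Longrightarrow>
    (Start_zero, [letter x], [inv_letter y], Guess i j) \<in> transitions"
| climb: "i \<in> rows \<Longrightarrow> j \<in> cols \<Longrightarrow> x \<in> X \<Longrightarrow> (Guess i j, [letter x], [], Guess i j) \<in> transitions"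
| settle: "i \<in> rows \<Longrightarrow> j \<in> cols \<Longrightarrow> (Guess i j, [], [], Track i j) \<in> transitions"
| one_to_zero: "y \<in> Y \<Longrightarrow> \<tau> y = None \<Longrightarrow> (Start_one, [], [letter y], Done_zero) \<in> transitions"
| zero_forward: "y \<in> Y \<Longrightarrow> (Start_zero, [], [letter y], Done_zero) \<in> transitions"
| zero_backward: "y \<in> Y \<Longrightarrow> (Start_zero, [], [inv_letter y], Done_zero) \<in> transitions"
| zero_to_one: "y \<in> Y \<Longrightarrow> \<tau> y = None \<Longrightarrow> (Start_zero, [], [inv_letter y], Done_one) \<in> transitions"

lemma finite_transitions: "finite transitions"
proof -
  have "finite X" "finite Y"
    using S_gens M_gens by (simp_all add: finite_gen_choice_def)
  define G where "G = {g. \<exists>y \<in> Y. \<exists>i j. \<tau> y = Some (i, g, j)} \<union>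
    {mS p g |p g. \<exists>j \<in> cols. \<exists>y \<in> Y. \<exists>i j'. \<tau> y = Some (i, g, j') \<and> P j i = Some p}"
  have "G \<subseteq> (\<lambda>y. fst (snd (the (\<tau> y)))) ` Y \<union>
    (\<lambda>(j, y). mS (the (P j (fst (the (\<tau> y))))) (fst (snd (the (\<tau> y))))) ` (cols \<times> Y)"
    unfolding G_def by force
  then have "finite G"
    by (rule finite_subset) (simp add: \<open>finite Y\<close> finite_cols)
  have G: "y \<in> Y \<Longrightarrow> \<tau> y = Some (i, g, j) \<Longrightarrow> g \<in> G"
    "j \<in> cols \<Longrightarrow> y \<in> Y \<Longrightarrow> \<tau> y = Some (i, g, j') \<Longrightarrow> P j i = Some p \<Longrightarrow> mS p g \<in> G"
    for y i g j j' p
    unfolding G_def by blast+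
  define Q where "Q = {Start_one, Start_zero, Done_one, Done_zero} \<union>
    (\<lambda>(i, j). Track i j) ` (rows \<times> cols) \<union> (\<lambda>(i, j). Guess i j) ` (rows \<times> cols)"
  have Q: "Start_one \<in> Q" "Start_zero \<in> Q" "Done_one \<in> Q" "Done_zero \<in> Q"
    "i \<in> rows \<Longrightarrow> j \<in> cols \<Longrightarrow> Track i j \<in> Q" "i \<in> rows \<Longrightarrow> j \<in> cols \<Longrightarrow> Guess i j \<in> Q"
    for i j
    unfolding Q_def by auto
  define V where "V = {[]} \<union> (\<lambda>x. [letter x]) ` X \<union> (\<lambda>x. [inv_letter x]) ` X \<union>
    (\<lambda>g. map letter (spell g)) ` G \<union> (\<lambda>g. inv_word (spell g)) ` G \<union>
    (\<lambda>(g, x). inv_word (spell g) @ [inv_letter x, letter x]) ` (G \<times> X)"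
  have V: "[] \<in> V" "x \<in> X \<Longrightarrow> [letter x] \<in> V" "x \<in> X \<Longrightarrow> [inv_letter x] \<in> V"
    "g \<in> G \<Longrightarrow> map letter (spell g) \<in> V" "g \<in> G \<Longrightarrow> inv_word (spell g) \<in> V"
    "g \<in> G \<Longrightarrow> x \<in> X \<Longrightarrow> inv_word (spell g) @ [inv_letter x, letter x] \<in> V"
    for x g
    unfolding V_def by auto
  define U where "U = {[]} \<union> (\<lambda>y. [letter y]) ` Y \<union> (\<lambda>y. [inv_letter y]) ` Y"
  have U: "[] \<in> U" "y \<in> Y \<Longrightarrow> [letter y] \<in> U" "y \<in> Y \<Longrightarrow> [inv_letter y] \<in> U" for y
    unfolding U_def by auto
  have "(q, v, u, q') \<in> Q \<times> V \<times> U \<times> Q" if "(q, v, u, q') \<in> transitions" for q v u q'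
    using that by cases (auto intro: Q U V G dest: gen_in_rows_cols)
  then have "transitions \<subseteq> Q \<times> V \<times> U \<times> Q"
    by auto
  moreover have "finite (Q \<times> V \<times> U \<times> Q)"
    using \<open>finite X\<close> \<open>finite Y\<close> \<open>finite G\<close> finite_rows finite_cols
    by (simp add: Q_def V_def U_def)
  ultimately show ?thesis
    by (rule finite_subset)
qed

text \<open>\<open>linked q c a\<close>: when the transducer is in state q and the S-path stands at c, the rest
  of the output is a path of M^1 starting at a (\<open>run_sound\<close>). \<open>Track i j\<close> stands at (i, g, j)
  while the S-path stands at g; \<open>Guess i j\<close> has written an edge back into some (i, g, j) whose g
  the S-path is still spelling; \<open>Done_zero\<close> stays at 0 while the S-path returns to 1.
  \<open>admissible q c\<close> restricts the S-vertices at which q can be entered.\<close>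

fun admissible :: "('i, 'j) state \<Rightarrow> 's option \<Rightarrow> bool" where
  "admissible Start_one c \<longleftrightarrow> c = None"
| "admissible (Track i j) c \<longleftrightarrow> c \<noteq> None"
| "admissible (Guess i j) c \<longleftrightarrow> c \<noteq> None"
| "admissible _ c \<longleftrightarrow> True"

fun linked :: "('i, 'j) state \<Rightarrow> 's option \<Rightarrow> ('i \<times> 's \<times> 'j) option option \<Rightarrow> bool" where
  "linked Start_one c a \<longleftrightarrow> a = None"
| "linked Start_zero c a \<longleftrightarrow> a = Some None"
| "linked (Track i j) c a \<longleftrightarrow> (\<exists>g. c = Some g \<and> a = Some (Some (i, g, j)))"
| "linked (Guess i j) c a \<longleftrightarrow> (\<exists>g. a = Some (Some (i, g, j)))"
| "linked Done_one c a \<longleftrightarrow> c = None \<and> a = None"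
| "linked Done_zero c a \<longleftrightarrow> a = Some None"

lemma transition_admissible:
  assumes "(q, v, u, q') \<in> transitions" "admissible q c" "S.path c v b"
  shows "admissible q' b"
  using assms(1)
proof cases
  case (enter y i g j)
  with assms(3) show ?thesis
    using spell[of g] gen_in S.path_map_letter_neq_None by auto
next
  case (forward i j y i' g j' p)
  with assms(3) show ?thesis
    using spell[of "mS p g"] P_mult_gen_in cols_subset S.path_map_letter_neq_None by auto
next
  case (backward i j' y x i' g j p)
  with assms(3) S.path_append_letter_neq_None[of c "inv_word (spell (mS p g)) @ [inv_letter x]" x b]
  show ?thesis by simp
next
  case (revive i j y x)
  with assms(3) S.path_append_letter_neq_None[of c "[]" x b] show ?thesis by simp
next
  case (climb i j x)
  with assms(3) S.path_append_letter_neq_None[of c "[]" x b] show ?thesis by simp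
next
  case (settle i j)
  with assms(2,3) show ?thesis by (simp add: loop_path_Nil_iff)
qed simp_all

lemma forward_sound:
  assumes "i \<in> rows" "j \<in> cols" "y \<in> Y" "\<tau> y = Some (i', g, j')" "P j i' = Some p"
    and "S.path (Some h) (map letter (spell (mS p g))) b" "linked (Track i j') b a'"
  shows "M.path (Some (Some (i, h, j))) [letter y] a'"
proof -
  have "h \<in> S" "p \<in> S" "g \<in> S"
    using S.path_source_in[OF assms(6)] assms(2-5) gen_in P_entry_in cols_subset by auto
  moreover have "mS p g \<in> S"
    using P_mult_gen_in assms(2-5) cols_subset by blast
  ultimately have "a' = Some (Some (i, mS (mS h p) g, j'))"
    using assms(6,7) spell S.path_map_letter_iff S.mult_assoc by auto
  moreover have "Some (Some (i, h, j)) \<in> M1"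
    using assms(1,2) \<open>h \<in> S\<close> rows_subset cols_subset by auto
  ultimately show ?thesis
    using M.path_edge[of "Some (Some (i, h, j))" y] assms(3-5) by simp
qed

lemma backward_sound:
  assumes "x \<in> X" "y \<in> Y" "\<tau> y = Some (i', g, j)" "P j' i' = Some p" "j' \<in> cols"
    and "S.path (Some g0) (inv_word (spell (mS p g)) @ [inv_letter x, letter x]) b"
    and "linked (Track i j') b a'" "a' \<in> M1"
  shows "M.path (Some (Some (i, g0, j))) [inv_letter y] a'"
proof -
  obtain h where b: "b = Some h" and a': "a' = Some (Some (i, h, j'))"
    using assms(7) by auto
  from assms(6) obtain d where d: "S.path (Some g0) (inv_word (spell (mS p g))) d"
    and "S.path d [inv_letter x, letter x] b"
    by (auto simp: S.path_append_iff)
  then have "d = b"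
    by (auto simp: loop_path_inv_letter_iff loop_path_letter_iff loop_path_Nil_iff)
  have "h \<in> S" "p \<in> S" "g \<in> S"
    using assms(2-5,8) a' gen_in P_entry_in cols_subset by auto
  moreover have "mS p g \<in> S"
    using P_mult_gen_in assms(2-5) cols_subset by blast
  ultimately have "g0 = mS (mS h p) g"
    using d \<open>d = b\<close> b spell S.path_inv_word_iff S.mult_assoc by auto
  with assms(2-4) M.path_inv_edge[OF assms(8,2)] a' show ?thesis
    by simp
qed

lemma transition_sound:
  assumes "(q, v, u, q') \<in> transitions" "admissible q c" "S.path c v b"
    and "linked q' b a'" "a' \<in> M1"
  shows "\<exists>a. linked q c a \<and> M.path a u a'"
  using assms(1)
proof cases
  case (enter y i g j)
  then have "b = Some g"
    using assms(2,3) spell gen_in S.path_map_letter_iff by auto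
  with enter assms(4) have "M.path None u a'"
    using M.path_edge[of None y] by simp
  with enter show ?thesis by auto
next
  case (forward i j y i' g j' p)
  with assms(2-4) forward_sound show ?thesis by auto
next
  case (backward i j' y x i' g j p)
  with assms(2-5) backward_sound show ?thesis by auto
next
  case (leave y i g j)
  with assms(4) have "b = None" "a' = None" by simp_all
  with leave assms(3) have "c = Some g"
    using spell gen_in S.path_inv_word_iff by auto
  with leave \<open>a' = None\<close> show ?thesis
    using M.path_inv_edge[of None y] by auto
next
  case (vanish i j y)
  obtain g0 where "c = Some g0" "g0 \<in> S"
    using assms(2,3) vanish by (auto simp: loop_path_Nil_iff)
  moreover have "Some (Some (i, g0, j)) \<in> M1"
    using vanish \<open>g0 \<in> S\<close> rows_subset cols_subset by auto
  ultimately show ?thesis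
    using vanish assms(4) M.path_edge[of "Some (Some (i, g0, j))" y] by (auto simp: rees_mult_killed)
next
  case (revive i j y x)
  with assms(4,5) show ?thesis
    using M.path_inv_edge[of a' y] by (auto simp: rees_mult_killed)
qed (use assms(3-5) M.path_edge[of None] M.path_edge[of "Some None"] M.path_inv_edge[of None]
      M.path_inv_edge[of "Some None"] in \<open>fastforce simp: loop_path_Nil_iff\<close>)+

lemma run_sound:
  assumes "transducer_run transitions q v u r" "admissible q c" "S.path c v None"
    and "linked r None a'" "a' \<in> M1"
  shows "\<exists>a. linked q c a \<and> M.path a u a'"
  using assms
proof (induction arbitrary: c rule: transducer_run.induct)
  case (stay q)
  then show ?case by (auto simp: loop_path_Nil_iff)
next
  case (step q v0 u0 q' v' u' r)
  from step.prems(2) obtain b where b: "S.path c v0 b" "S.path b v' None"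
    by (auto simp: S.path_append_iff)
  with step obtain a1 where "linked q' b a1" "M.path a1 u' a'"
    using transition_admissible by blast
  moreover have "a1 \<in> M1"
    using \<open>M.path a1 u' a'\<close> by (rule M.path_source_in)
  ultimately obtain a where "linked q c a" "M.path a u0 a1"
    using transition_sound step.hyps(1) step.prems(1) b(1) by blast
  with \<open>M.path a1 u' a'\<close> show ?case
    using loop_path_append by blast
qed

definition segments :: "('i, 'j) state \<Rightarrow> ('i, 'j) state \<Rightarrow> nat list set" where
  "segments q f = {u. \<exists>v \<in> loop_problem S mS X \<sigma>. transducer_run transitions q v u f}"

definition from_one :: "nat list set" where
  "from_one = paths_one_one (segments Start_one Done_one) (segments Start_one Done_zero)
     (segments Start_zero Done_one) (segments Start_zero Done_zero)"

definition from_zero :: "nat list set" where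
  "from_zero = paths_zero_one (segments Start_one Done_one) (segments Start_one Done_zero)
     (segments Start_zero Done_one) (segments Start_zero Done_zero)"

lemma segments_sound:
  assumes "u \<in> segments q f" "admissible q None" "linked f None a'" "a' \<in> M1"
  shows "\<exists>a. linked q None a \<and> M.path a u a'"
  using assms run_sound unfolding segments_def loop_problem_def by blast

lemma from_one_sound: "from_one \<subseteq> {u. M.path None u None}"
  unfolding from_one_def
proof (rule paths_one_one_sound[where path = M.path and p = None and q = "Some None"])
  show "M.path None [] None" "M.path (Some None) [] (Some None)"
    by (simp_all add: loop_path_Nil_iff)
qed (use segments_sound[of _ Start_one Done_one None] segments_sound[of _ Start_one Done_zero "Some None"]
      segments_sound[of _ Start_zero Done_one None] segments_sound[of _ Start_zero Done_zero "Some None"]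
      in \<open>auto intro: loop_path_append\<close>)

fun continuations :: "('i, 'j) state \<Rightarrow> nat list set" where
  "continuations Done_one = from_one"
| "continuations Done_zero = from_zero"
| "continuations _ = {}"

definition produces :: "('i, 'j) state \<Rightarrow> 's option \<Rightarrow> nat list \<Rightarrow> bool" where
  "produces q c u \<longleftrightarrow> (\<exists>v u1 u2 f. u = u1 @ u2 \<and> transducer_run transitions q v u1 f \<and>
     S.path c v None \<and> u2 \<in> continuations f)"

lemma produces_final: "u \<in> continuations f \<Longrightarrow> produces f None u"
  unfolding produces_def using transducer_run.stay[of transitions f]
  by (fastforce simp: loop_path_Nil_iff)

lemma produces_prepend:
  assumes "(q, v, u, q') \<in> transitions" "S.path c v b" "produces q' b w"
  shows "produces q c (u @ w)"
proof -
  from assms(3) obtain v' u1 u2 f where "w = u1 @ u2" "transducer_run transitions q' v' u1 f"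
    "S.path b v' None" "u2 \<in> continuations f"
    unfolding produces_def by blast
  with assms(1,2) show ?thesis
    unfolding produces_def by (metis append.assoc loop_path_append transducer_run.step)
qed

lemma produces_Start_one: "produces Start_one None u \<Longrightarrow> u \<in> from_one"
  unfolding produces_def
proof (elim exE conjE)
  fix v u1 u2 f
  assume "u = u1 @ u2" "transducer_run transitions Start_one v u1 f" "S.path None v None"
    and u2: "u2 \<in> continuations f"
  then have "u1 \<in> segments Start_one f"
    unfolding segments_def loop_problem_def by blast
  with u2 \<open>u = u1 @ u2\<close> show "u \<in> from_one"
    by (cases f) (auto simp: from_one_def from_zero_def
        intro: paths_one_one_prepend_one paths_one_one_prepend_zero)
qed

lemma produces_Start_zero: "produces Start_zero None u \<Longrightarrow> u \<in> from_zero"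
  unfolding produces_def
proof (elim exE conjE)
  fix v u1 u2 f
  assume "u = u1 @ u2" "transducer_run transitions Start_zero v u1 f" "S.path None v None"
    and u2: "u2 \<in> continuations f"
  then have "u1 \<in> segments Start_zero f"
    unfolding segments_def loop_problem_def by blast
  with u2 \<open>u = u1 @ u2\<close> show "u \<in> from_zero"
    by (cases f) (auto simp: from_one_def from_zero_def
        intro: paths_zero_one_prepend_one paths_zero_one_prepend_zero)
qed

lemma produces_Done_zero:
  assumes "c \<in> carrier1 S" "w \<in> from_zero"
  shows "produces Done_zero c w"
proof -
  have "produces Done_zero c w" if "S.path c (inv_word zs) None" for zs
    using that
  proof (induction zs arbitrary: c rule: rev_induct)
    case Nil
    then show ?case using produces_final assms(2) by (simp add: loop_path_Nil_iff)
  next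
    case (snoc x zs)
    then obtain b where b: "b \<in> carrier1 S" "x \<in> X" "mult1 mS b (Some (\<sigma> x)) = c"
      "S.path b (inv_word zs) None"
      unfolding inv_word_snoc loop_path_inv_letter_iff by blast
    from produces_prepend[OF transitions.unwind[OF b(2)] S.path_inv_edge[OF b(1,2)] snoc.IH[OF b(4)]]
    show ?case using b(3) by simp
  qed
  moreover have "\<exists>zs. S.path c (inv_word zs) None"
  proof (cases c)
    case None
    then show ?thesis by (auto intro: exI[of _ "[]"] simp: loop_path_Nil_iff)
  next
    case (Some g)
    with assms(1) show ?thesis
      using spell[of g] S.path_inv_word_iff[of "spell g" c None] by auto
  qed
  ultimately show ?thesis by blast
qed

lemma produces_Guess:
  assumes "i \<in> rows" "j \<in> cols"
  shows "set zs \<subseteq> X \<Longrightarrow> S.path c (map letter zs) d \<Longrightarrow> produces (Track i j) d w \<Longrightarrow>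
    produces (Guess i j) c w"
proof (induction zs arbitrary: c)
  case Nil
  then have "c = d"
    by (simp add: loop_path_Nil_iff)
  with produces_prepend[OF transitions.settle[OF assms], of c d w] Nil.prems show ?case
    by simp
next
  case (Cons x zs)
  from Cons.prems(2) have x: "x \<in> X" and c: "c \<in> carrier1 S"
    and "S.path (mult1 mS c (Some (\<sigma> x))) (map letter zs) d"
    by (simp_all add: loop_path_letter_iff)
  with Cons.IH Cons.prems have "produces (Guess i j) (mult1 mS c (Some (\<sigma> x))) w"
    by simp
  from produces_prepend[OF transitions.climb[OF assms x] S.path_edge[OF c x] this] show ?case
    by simp
qed

fun accepts :: "('i \<times> 's \<times> 'j) option option \<Rightarrow> nat list \<Rightarrow> bool" where
  "accepts None u \<longleftrightarrow> u \<in> from_one"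
| "accepts (Some None) u \<longleftrightarrow> u \<in> from_zero"
| "accepts (Some (Some (i, g, j))) u \<longleftrightarrow> produces (Track i j) (Some g) u"

lemma M1_cases:
  assumes "a \<in> M1"
  obtains "a = None" | "a = Some None"
    | i g j where "a = Some (Some (i, g, j))" "i \<in> rows" "g \<in> S" "j \<in> cols"
  using assms rees_carrier_rows_cols by (cases a rule: option.exhaust) (auto simp: rees_carrier_def)

lemma spell_path: "g \<in> S \<Longrightarrow> S.path a (map letter (spell g)) (mult1 mS a (Some g)) \<longleftrightarrow> a \<in> carrier1 S"
  using spell S.path_map_letter_iff S.path_source_in by metis

lemma accepts_forward_nonzero:
  assumes "i \<in> rows" "h \<in> S" "j \<in> cols" "y \<in> Y"
    and "accepts (Some (rees_mult mS P (Some (i, h, j)) (\<tau> y))) w"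
  shows "produces (Track i j) (Some h) (letter y # w)"
proof (cases "rees_mult mS P (Some (i, h, j)) (\<tau> y)")
  case None
  with assms(5) have "produces Done_zero (Some h) w"
    using produces_Done_zero assms(2) by simp
  from produces_prepend[OF transitions.vanish[OF assms(1,3,4)] _ this] None assms(2)
  show ?thesis
    using kills_iff[of j y i h] by (simp add: loop_path_Nil_iff)
next
  case (Some r)
  then obtain i' g j' p where y: "\<tau> y = Some (i', g, j')" "P j i' = Some p"
    and r: "r = (i, mS (mS h p) g, j')"
    by (auto elim: rees_mult_eq_SomeE)
  have "p \<in> S" "g \<in> S" "mS p g \<in> S"
    using y assms(3,4) gen_in P_entry_in P_mult_gen_in cols_subset by blast+
  with assms(2) have "S.path (Some h) (map letter (spell (mS p g))) (Some (mS (mS h p) g))"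
    using spell_path[of "mS p g" "Some h"] S.mult_assoc by simp
  from produces_prepend[OF transitions.forward[OF assms(1,3,4) y] this] Some r assms(5)
  show ?thesis
    by simp
qed

lemma accepts_forward:
  assumes "a \<in> M1" "y \<in> Y" "accepts (mult1 (rees_mult mS P) a (Some (\<tau> y))) w"
  shows "accepts a (letter y # w)"
  using assms(1)
proof (cases rule: M1_cases)
  case 1
  have "produces Start_one None (letter y # w)"
  proof (cases "\<tau> y")
    case None
    with assms(3) 1 have "produces Done_zero None w"
      by (simp add: produces_final)
    from produces_prepend[OF transitions.one_to_zero[OF assms(2) None] _ this] show ?thesis
      by (simp add: loop_path_Nil_iff)
  next
    case (Some t)
    then obtain i g j where t: "\<tau> y = Some (i, g, j)" by (cases t) auto
    with gen_in assms(2) have "S.path None (map letter (spell g)) (Some g)"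
      using spell_path[of g None] by simp
    from produces_prepend[OF transitions.enter[OF assms(2) t] this] assms(3) 1 t show ?thesis
      by simp
  qed
  with 1 show ?thesis
    by (simp add: produces_Start_one)
next
  case 2
  with assms(3) have "produces Done_zero None w"
    by (simp add: produces_final)
  from produces_prepend[OF transitions.zero_forward[OF assms(2)] _ this] 2 show ?thesis
    by (simp add: produces_Start_zero loop_path_Nil_iff)
next
  case (3 i h j)
  with assms accepts_forward_nonzero show ?thesis
    by simp
qed

lemma inv_letter_letter_loop: "h \<in> S \<Longrightarrow> \<exists>x \<in> X. S.path (Some h) [inv_letter x, letter x] (Some h)"
proof -
  assume "h \<in> S"
  then obtain zs x where zs: "spell h = zs @ [x]" "set zs \<subseteq> X" "x \<in> X"
    using spell[of h] by (cases "spell h" rule: rev_exhaust) auto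
  then have "mult1 mS (S.eval1 zs) (Some (\<sigma> x)) = Some h"
    using spell[OF \<open>h \<in> S\<close>] S.eval1_append[of zs "[x]"] by simp
  with S.path_inv_edge[OF S.eval1_in[OF zs(2)] zs(3)] S.path_edge[OF S.eval1_in[OF zs(2)] zs(3)]
  show ?thesis
    using loop_path_append[of S mS X \<sigma> _ "[inv_letter x]" _ "[letter x]"] zs(3) by fastforce
qed

lemma accepts_backward_nonzero:
  assumes "i \<in> rows" "h \<in> S" "j \<in> cols" "y \<in> Y" "produces (Track i j) (Some h) w"
  shows "accepts (Some (rees_mult mS P (Some (i, h, j)) (\<tau> y))) (inv_letter y # w)"
proof (cases "rees_mult mS P (Some (i, h, j)) (\<tau> y)")
  case None
  then have "kills j y"
    using kills_iff by blast
  obtain x zs where zs: "spell h = x # zs"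
    using spell[OF assms(2)] by (cases "spell h") auto
  with spell[OF assms(2)] have "x \<in> X" "S.path (Some (\<sigma> x)) (map letter zs) (Some h)"
    using S.path_map_letter_iff[of "Some (\<sigma> x)" zs] S.gens_in by auto
  with produces_Guess[OF assms(1,3)] assms(5) spell[OF assms(2)] zs
  have "produces (Guess i j) (Some (\<sigma> x)) w"
    by auto
  moreover have "S.path None [letter x] (Some (\<sigma> x))"
    using S.path_edge[of None x] \<open>x \<in> X\<close> by simp
  ultimately show ?thesis
    using produces_prepend[OF transitions.revive[OF assms(1,3,4) \<open>kills j y\<close> \<open>x \<in> X\<close>]] None
    by (simp add: produces_Start_zero)
next
  case (Some r)
  then obtain i' g j' p where y: "\<tau> y = Some (i', g, j')" "P j i' = Some p"
    and r: "r = (i, mS (mS h p) g, j')"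
    by (auto elim: rees_mult_eq_SomeE)
  have "p \<in> S" "g \<in> S" "mS p g \<in> S"
    using y assms(3,4) gen_in P_entry_in P_mult_gen_in cols_subset by blast+
  with assms(2) have unwind: "S.path (Some (mS (mS h p) g)) (inv_word (spell (mS p g))) (Some h)"
    using spell[of "mS p g"] S.path_inv_word_iff S.mult_assoc by simp
  obtain x where "x \<in> X" and detour: "S.path (Some h) [inv_letter x, letter x] (Some h)"
    using inv_letter_letter_loop[OF assms(2)] by blast
  note loop_path_append[OF unwind detour]
  from produces_prepend[OF transitions.backward[OF assms(1,3,4) \<open>x \<in> X\<close> y] this assms(5)] Some r
  show ?thesis
    by simp
qed

lemma accepts_backward:
  assumes "a \<in> M1" "y \<in> Y" "accepts a w"
  shows "accepts (mult1 (rees_mult mS P) a (Some (\<tau> y))) (inv_letter y # w)"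
  using assms(1)
proof (cases rule: M1_cases)
  case 1
  with assms(3) have w: "produces Done_one None w"
    by (simp add: produces_final)
  show ?thesis
  proof (cases "\<tau> y")
    case None
    from produces_prepend[OF transitions.zero_to_one[OF assms(2) None] _ w] None 1 show ?thesis
      by (simp add: produces_Start_zero loop_path_Nil_iff)
  next
    case (Some t)
    then obtain i g j where t: "\<tau> y = Some (i, g, j)" by (cases t) auto
    with gen_in assms(2) have "S.path (Some g) (inv_word (spell g)) None"
      using spell[of g] S.path_inv_word_iff by simp
    from produces_prepend[OF transitions.leave[OF assms(2) t] this w] 1 t show ?thesis
      by simp
  qed
next
  case 2
  with assms(3) have "produces Done_zero None w"
    by (simp add: produces_final)
  from produces_prepend[OF transitions.zero_backward[OF assms(2)] _ this] 2 show ?thesis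
    by (simp add: produces_Start_zero loop_path_Nil_iff)
next
  case (3 i h j)
  with assms accepts_backward_nonzero show ?thesis
    by simp
qed

lemma path_to_one_accepts: "M.path a u None \<Longrightarrow> accepts a u"
proof (induction a u "None :: ('i \<times> 's \<times> 'j) option option" rule: loop_path.induct)
  case nil
  then show ?case by (simp add: from_one_def paths_one_one_Nil)
next
  case (fwd a y w)
  then show ?case by (simp add: accepts_forward)
next
  case (bwd a y b w)
  then show ?case using accepts_backward by blast
qed

lemma loop_problem_rees: "loop_problem (rees_carrier S I J) (rees_mult mS P) Y \<tau> = from_one"
  using from_one_sound path_to_one_accepts[of None] unfolding loop_problem_def by auto

lemma segments_image: "\<exists>T. rational_transduction T \<and> segments q f = T `` loop_problem S mS X \<sigma>"
  using rational_transduction_transducer_run[OF finite_transitions, of "{f}" q]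
  unfolding segments_def by auto

end

theorem theorem4p2:
  fixes \<F> :: "nat list set set"
    and S :: "'s set" and mS :: "'s \<Rightarrow> 's \<Rightarrow> 's"
    and I :: "'i set" and J :: "'j set" and P :: "'j \<Rightarrow> 'i \<Rightarrow> 's option"
  assumes trans_closed: "\<And>L T. L \<in> \<F> \<Longrightarrow> rational_transduction T \<Longrightarrow> T `` L \<in> \<F>"
    and union_closed: "\<And>L1 L2. L1 \<in> \<F> \<Longrightarrow> L2 \<in> \<F> \<Longrightarrow> L1 \<union> L2 \<in> \<F>"
    and prod_closed: "\<And>L1 L2. L1 \<in> \<F> \<Longrightarrow> L2 \<in> \<F> \<Longrightarrow> lang_prod L1 L2 \<in> \<F>"
    and star_closed: "\<And>L. L \<in> \<F> \<Longrightarrow> lang_star L \<in> \<F>"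
    and S_semigroup: "semigroup_on S mS"
    and P_entries: "\<And>j i. j \<in> J \<Longrightarrow> i \<in> I \<Longrightarrow> P j i = None \<or> the (P j i) \<in> S"
    and M_fg: "\<exists>Y \<tau>. finite_gen_choice (rees_carrier S I J) (rees_mult mS P) Y \<tau>"
    and S_loop: "\<exists>X \<sigma>. finite_gen_choice S mS X \<sigma> \<and> loop_problem S mS X \<sigma> \<in> \<F>"
  shows "\<forall>Y \<tau>. finite_gen_choice (rees_carrier S I J) (rees_mult mS P) Y \<tau> \<longrightarrow>
           loop_problem (rees_carrier S I J) (rees_mult mS P) Y \<tau> \<in> \<F>"
proof (intro allI impI)
  fix Y \<tau>
  assume M_gens: "finite_gen_choice (rees_carrier S I J) (rees_mult mS P) Y \<tau>"
  obtain X \<sigma> where S_gens: "finite_gen_choice S mS X \<sigma>" and LS: "loop_problem S mS X \<sigma> \<in> \<F>"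
    using S_loop by blast
  interpret rees_loops S mS I J P X \<sigma> Y \<tau>
    using S_semigroup P_entries S_gens M_gens by unfold_locales
  have "segments q f \<in> \<F>" for q f
    using segments_image[of q f] trans_closed[OF LS] by auto
  then have "from_one \<in> \<F>"
    unfolding from_one_def paths_one_one_def by (intro star_closed union_closed prod_closed)
  then show "loop_problem (rees_carrier S I J) (rees_mult mS P) Y \<tau> \<in> \<F>"
    by (simp add: loop_problem_rees)
qed

end
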